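(* Let $T\ge1$ be an integer and assume $\psi_{A,a}>\psi_{A,b}$ and $\psi_{B,b}>\psi_{B,a}$. Then the point $(\theta_{A,a},\theta_{B,a})=(0,1)$ (i.e., $\theta_{A,b}=1$ and $\theta_{B,a}=1$: every user of each group is initially shown the article of the other group) is not a maximizer of $$J(\theta_{A,a},\theta_{B,a})=\sum_{t=1}^T\sum_{g\in\{A,B\}}\sum_{s\in\{a,b\}} l_{g,s}(t,\theta)$$ over $[0,1]^2$, where $\theta_{A,b}=1-\theta_{A,a}$ and $\theta_{B,b}=1-\theta_{B,a}$.
   Context: Groups are $g\in\{A,B\}$; for a group $g$, $g'$ denotes the other group. Articles are $s\in\{a,b\}$. Parameters: $\pi_A=\pi\in(0,1)$, $\pi_B=1-\pi$; $q_A,q_B\in(\tfrac12,1)$; for each $g,s$ a real number $\psi_{g,s}\in(0,1)$. For fixed $s$, given $\theta_{A,s},\theta_{B,s}\in[0,1]$, the mass function is defined recursively for both groups by $l_{g,s}(1,\theta)=\pi_g\theta_{g,s}\psi_{g,s}$ and $l_{g,s}(t+1,\theta)=\psi_{g,s}\big(q_g l_{g,s}(t,\theta)+(1-q_{g'})l_{g',s}(t,\theta)\big)$ for $t\ge1$. *)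

theory Defs
  imports "HOL-Analysis.Analysis"
begin

datatype grp = GA | GB
datatype art = SA | SB

fun other :: "grp \<Rightarrow> grp" where
  "other GA = GB" | "other GB = GA"

definition pi_g :: "real \<Rightarrow> grp \<Rightarrow> real" where
  "pi_g p g = (if g = GA then p else 1 - p)"

text \<open>Mass function l_{g,s}(t,theta). Parameters: pi, q (per group), psi (per group and
article), theta (per group and article). Time index t starts at 1; the value at t = 0 is
an unused dummy (0).\<close>
fun lmass :: "real \<Rightarrow> (grp \<Rightarrow> real) \<Rightarrow> (grp \<Rightarrow> art \<Rightarrow> real) \<Rightarrow> (grp \<Rightarrow> art \<Rightarrow> real)
    \<Rightarrow> nat \<Rightarrow> grp \<Rightarrow> art \<Rightarrow> real" where
  "lmass p q psi th 0 g s = 0"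
| "lmass p q psi th (Suc 0) g s = pi_g p g * th g s * psi g s"
| "lmass p q psi th (Suc (Suc t)) g s =
     psi g s * (q g * lmass p q psi th (Suc t) g s
                + (1 - q (other g)) * lmass p q psi th (Suc t) (other g) s)"

definition theta_of :: "real \<Rightarrow> real \<Rightarrow> grp \<Rightarrow> art \<Rightarrow> real" where
  "theta_of x y g s = (let v = (if g = GA then x else y) in if s = SA then v else 1 - v)"

definition Jobj :: "real \<Rightarrow> (grp \<Rightarrow> real) \<Rightarrow> (grp \<Rightarrow> art \<Rightarrow> real) \<Rightarrow> nat \<Rightarrow> real \<Rightarrow> real \<Rightarrow> real" where
  "Jobj p q psi T x y = (\<Sum>t\<in>{1..T}. \<Sum>g\<in>{GA, GB}. \<Sum>s\<in>{SA, SB}. lmass p q psi (theta_of x y) t g s)"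

end

theory Submission
  imports Defs
begin

text \<open>For a fixed article the mass vector evolves linearly, so the objective is linear in
\<open>(x, y)\<close>: the coefficient of each initial unit of mass is its total yield over the horizon,
computed by the adjoint recursion \<open>reach\<close>. The yield of article a in group A exceeds that of
article b, or the yield of b in group B exceeds that of a; by induction on the horizon this
holds because the group-mixing matrix with \<open>q\<^sub>A, q\<^sub>B > 1/2\<close> has positive determinant
\<open>q\<^sub>A + q\<^sub>B - 1\<close>. Hence moving \<open>x\<close> to 1 or \<open>y\<close> to 0 strictly increases the objective.\<close>

definition propagate :: "(grp \<Rightarrow> real) \<Rightarrow> (grp \<Rightarrow> real) \<Rightarrow> (grp \<Rightarrow> real) \<Rightarrow> grp \<Rightarrow> real" where
  "propagate ps q w g = ps g * (q g * w g + (1 - q (other g)) * w (other g))"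

fun reach :: "(grp \<Rightarrow> real) \<Rightarrow> (grp \<Rightarrow> real) \<Rightarrow> nat \<Rightarrow> grp \<Rightarrow> real" where
  "reach ps q 0 g = 0"
| "reach ps q (Suc n) g = ps g * (1 + q g * reach ps q n g + (1 - q g) * reach ps q n (other g))"

lemma lmass_Suc_eq_propagate:
  "lmass p q psi th (Suc t) g s =
     (propagate (\<lambda>h. psi h s) q ^^ t) (\<lambda>h. psi h s * (pi_g p h * th h s)) g"
  by (induction t arbitrary: g) (auto simp: propagate_def)

lemma sum_propagate_eq_reach:
  "(\<Sum>t<n. \<Sum>g\<in>{GA, GB}. (propagate ps q ^^ t) (\<lambda>h. ps h * c h) g)
     = (\<Sum>g\<in>{GA, GB}. c g * reach ps q n g)"
proof (induction n arbitrary: c)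
  case 0
  show ?case by simp
next
  case (Suc n)
  define c' where "c' h = q h * ps h * c h + (1 - q (other h)) * ps (other h) * c (other h)" for h
  have step: "propagate ps q (\<lambda>h. ps h * c h) = (\<lambda>h. ps h * c' h)"
    by (auto simp: propagate_def c'_def algebra_simps)
  have "(\<Sum>t<Suc n. \<Sum>g\<in>{GA, GB}. (propagate ps q ^^ t) (\<lambda>h. ps h * c h) g)
      = (\<Sum>g\<in>{GA, GB}. ps g * c g) + (\<Sum>g\<in>{GA, GB}. c' g * reach ps q n g)"
    by (simp only: sum.lessThan_Suc_shift funpow_Suc_right comp_def step Suc.IH) simp
  also have "\<dots> = (\<Sum>g\<in>{GA, GB}. c g * reach ps q (Suc n) g)"
    by (simp add: c'_def algebra_simps)
  finally show ?case .
qed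

lemma reach_nonneg:
  assumes "\<And>g. ps g \<ge> 0" and "\<And>g. 0 \<le> q g \<and> q g \<le> 1"
  shows "reach ps q n g \<ge> 0"
proof (induction n arbitrary: g)
  case 0
  show ?case by simp
next
  case (Suc n)
  show ?case
    using Suc.IH[of g] Suc.IH[of "other g"] assms[of g] by simp
qed

lemma mixed_difference_nonneg:
  fixes a b dA dB :: real
  assumes "dA > 0 \<or> dB > 0" and "1/2 < a" "a < 1" "1/2 < b" "b < 1"
  shows "a * dA - (1 - a) * dB \<ge> 0 \<or> b * dB - (1 - b) * dA \<ge> 0"
proof (rule ccontr)
  assume "\<not> ?thesis"
  then have lt: "a * dA < (1 - a) * dB" "b * dB < (1 - b) * dA" by auto
  have pos: "dA > 0" "dB > 0"
  proof -
    have "dB > 0" if "dA > 0"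
      using lt(1) mult_pos_pos[OF _ that, of a] zero_less_mult_pos[of "1 - a" dB] assms by auto
    moreover have "dA > 0" if "dB > 0"
      using lt(2) mult_pos_pos[OF _ that, of b] zero_less_mult_pos[of "1 - b" dA] assms by auto
    ultimately show "dA > 0" "dB > 0" using assms(1) by auto
  qed
  have "a * dA * (b * dB) < (1 - a) * dB * ((1 - b) * dA)"
    using pos assms by (intro mult_strict_mono[OF lt]) auto
  moreover have "(1 - a) * (1 - b) * (dA * dB) < a * b * (dA * dB)"
  proof (rule mult_strict_right_mono)
    show "(1 - a) * (1 - b) < a * b" using assms by (simp add: algebra_simps)
  qed (use pos in auto)
  ultimately show False by (simp add: algebra_simps)
qed

lemma reach_dominance:
  assumes q: "\<And>g. 1/2 < q g \<and> q g < 1"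
    and pos: "\<And>g. 0 < ps g" "\<And>g. 0 < ps' g"
    and A: "ps GA > ps' GA" and B: "ps' GB > ps GB"
  shows "reach ps q (Suc n) GA > reach ps' q (Suc n) GA
       \<or> reach ps' q (Suc n) GB > reach ps q (Suc n) GB"
proof (induction n)
  case 0
  show ?case using A by simp
next
  case (Suc n)
  define R where "R = reach ps q (Suc n)"
  define R' where "R' = reach ps' q (Suc n)"
  have q01: "0 \<le> q g \<and> q g \<le> 1" for g using q[of g] by auto
  have nonneg: "R g \<ge> 0" "R' g \<ge> 0" for g
    unfolding R_def R'_def using reach_nonneg q01 pos less_imp_le by metis+
  have positive_part:
    "(ps GA - ps' GA) * (1 + q GA * R GA + (1 - q GA) * R GB) > 0"
    "(ps' GB - ps GB) * (1 + q GB * R' GB + (1 - q GB) * R' GA) > 0"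
    using A B nonneg q01 by (auto intro!: mult_pos_pos add_pos_nonneg)
  \<comment> \<open>each new difference is a positive term plus a positive multiple of a mixed old one\<close>
  have difference:
    "reach ps q (Suc (Suc n)) GA - reach ps' q (Suc (Suc n)) GA
      = (ps GA - ps' GA) * (1 + q GA * R GA + (1 - q GA) * R GB)
        + ps' GA * (q GA * (R GA - R' GA) - (1 - q GA) * (R' GB - R GB))"
    "reach ps' q (Suc (Suc n)) GB - reach ps q (Suc (Suc n)) GB
      = (ps' GB - ps GB) * (1 + q GB * R' GB + (1 - q GB) * R' GA)
        + ps GB * (q GB * (R' GB - R GB) - (1 - q GB) * (R GA - R' GA))"
    by (simp_all add: R_def R'_def algebra_simps)
  have "q GA * (R GA - R' GA) - (1 - q GA) * (R' GB - R GB) \<ge> 0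
      \<or> q GB * (R' GB - R GB) - (1 - q GB) * (R GA - R' GA) \<ge> 0"
    using Suc.IH q[of GA] q[of GB] unfolding R_def R'_def
    by (intro mixed_difference_nonneg) auto
  then show ?case
  proof
    assume "q GA * (R GA - R' GA) - (1 - q GA) * (R' GB - R GB) \<ge> 0"
    then have "ps' GA * (q GA * (R GA - R' GA) - (1 - q GA) * (R' GB - R GB)) \<ge> 0"
      using pos(2)[of GA] by simp
    then show ?case using difference(1) positive_part(1) by linarith
  next
    assume "q GB * (R' GB - R GB) - (1 - q GB) * (R GA - R' GA) \<ge> 0"
    then have "ps GB * (q GB * (R' GB - R GB) - (1 - q GB) * (R GA - R' GA)) \<ge> 0"
      using pos(1)[of GB] by simp
    then show ?case using difference(2) positive_part(2) by linarith
  qed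
qed

lemma Jobj_eq_reach:
  "Jobj p q psi T x y =
       p * x * reach (\<lambda>h. psi h SA) q T GA + (1 - p) * y * reach (\<lambda>h. psi h SA) q T GB
     + p * (1 - x) * reach (\<lambda>h. psi h SB) q T GA
     + (1 - p) * (1 - y) * reach (\<lambda>h. psi h SB) q T GB"
proof -
  have shift: "(\<Sum>t\<in>{1..T}. f t) = (\<Sum>t<T. f (Suc t))" for f :: "nat \<Rightarrow> real"
    by (induction T) auto
  have "Jobj p q psi T x y = (\<Sum>s\<in>{SA, SB}. \<Sum>t<T. \<Sum>g\<in>{GA, GB}.
          (propagate (\<lambda>h. psi h s) q ^^ t) (\<lambda>h. psi h s * (pi_g p h * theta_of x y h s)) g)"
    unfolding Jobj_def shift lmass_Suc_eq_propagate
    by (simp only: sum.swap[of _ "{SA, SB}"] sum.swap[of _ _ "{..<T}"])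
  also have "\<dots> = (\<Sum>s\<in>{SA, SB}. \<Sum>g\<in>{GA, GB}.
          pi_g p g * theta_of x y g s * reach (\<lambda>h. psi h s) q T g)"
    by (simp only: sum_propagate_eq_reach)
  finally show ?thesis
    by (simp add: pi_g_def theta_of_def algebra_simps)
qed

theorem corollary1:
  fixes p :: real and q :: "grp \<Rightarrow> real" and psi :: "grp \<Rightarrow> art \<Rightarrow> real" and T :: nat
  assumes "0 < p" "p < 1"
    and "\<And>g. 1/2 < q g \<and> q g < 1"
    and "\<And>g s. 0 < psi g s \<and> psi g s < 1"
    and "T \<ge> 1"
    and "psi GA SA > psi GA SB" and "psi GB SB > psi GB SA"
  shows "\<not> (\<forall>x\<in>{0..1}. \<forall>y\<in>{0..1}. Jobj p q psi T x y \<le> Jobj p q psi T 0 1)"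
proof -
  obtain n where T: "T = Suc n" using \<open>T \<ge> 1\<close> by (cases T) auto
  let ?RA = "reach (\<lambda>h. psi h SA) q T" and ?RB = "reach (\<lambda>h. psi h SB) q T"
  have "?RA GA > ?RB GA \<or> ?RB GB > ?RA GB"
    unfolding T by (rule reach_dominance) (use assms in auto)
  then have "p * (?RA GA - ?RB GA) > 0 \<or> (1 - p) * (?RB GB - ?RA GB) > 0"
    using \<open>0 < p\<close> \<open>p < 1\<close> by auto
  then have "Jobj p q psi T 1 1 > Jobj p q psi T 0 1 \<or> Jobj p q psi T 0 0 > Jobj p q psi T 0 1"
    unfolding Jobj_eq_reach by (simp add: algebra_simps)
  then show ?thesis by (metis atLeastAtMost_iff not_le order_refl zero_le_one)
qed

end
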